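(* Let $n$ be a positive integer and $r$ a positive divisor of $n$. For every $\chi:\mathbb Z_r\to\{1,-1\}$, \[\operatorname{disc}(\mathcal A_n)\le \max_{A\in\mathcal A_r}|\chi(A)|+\frac{n}{r}\cdot\max_{A_0\in\mathcal A_r^0}|\chi(A_0)|.\]
   Context: For a positive integer $N$, an arithmetic progression in $\mathbb{Z}_N$ is a set $\{a+kd: 0\le k<l\}$ with $a,d\in\mathbb{Z}_N$ and $l$ an integer with $0\le l\le N/\gcd(N,d)$ (with $\gcd(0,N)=N$); $\mathcal A_N$ is the family of all of them. For $s,i\in\mathbb{Z}_N$, $C(s,i)=\{x\in\mathbb{Z}_N: x=i+ks \text{ for some } k\in\mathbb{Z}_N\}$ (the congruence class of $i$ modulo $s$), and $\mathcal A_N^0=\{C(s,i): s,i\in\mathbb{Z}_N\}$. For $\chi$ and a set $B$, $\chi(B)=\sum_{x\in B}\chi(x)$, and $\operatorname{disc}(\mathcal A_N)=\min_{\chi:\mathbb{Z}_N\to\{1,-1\}}\max_{A\in\mathcal A_N}|\chi(A)|$. *)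

theory Defs
  imports Complex_Main
begin

text \<open>Z_N is modelled as the carrier {0..<N} of naturals with arithmetic mod N.\<close>

definition APs :: "nat \<Rightarrow> nat set set" where
  "APs N = {{(a + k * d) mod N | k. k < l} | a d l.
              a < N \<and> d < N \<and> l \<le> N div gcd N d}"

definition cclass :: "nat \<Rightarrow> nat \<Rightarrow> nat \<Rightarrow> nat set" where
  "cclass N s i = {(i + k * s) mod N | k. k < N}"

definition APs0 :: "nat \<Rightarrow> nat set set" where
  "APs0 N = {cclass N s i | s i. s < N \<and> i < N}"

definition colouring :: "nat \<Rightarrow> (nat \<Rightarrow> int) \<Rightarrow> bool" where
  "colouring N \<chi> \<longleftrightarrow> (\<forall>x<N. \<chi> x = 1 \<or> \<chi> x = -1)"

definition maxdev :: "(nat \<Rightarrow> int) \<Rightarrow> nat set set \<Rightarrow> int" where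
  "maxdev \<chi> F = Max ((\<lambda>A. \<bar>sum \<chi> A\<bar>) ` F)"

definition disc :: "nat \<Rightarrow> int" where
  "disc N = Min {maxdev \<chi> (APs N) | \<chi>. colouring N \<chi>}"

end

theory Submission
  imports Defs
begin

text \<open>
  Lift \<open>\<chi>\<close> to \<open>\<psi> x = \<chi> (x mod r)\<close> on \<open>\<int>\<^sub>n\<close>. Reduced mod \<open>r\<close>, a progression
  \<open>a, a + d, \<dots>\<close> of \<open>\<int>\<^sub>n\<close> runs through \<open>\<int>\<^sub>r\<close> with period \<open>p = r / gcd r d\<close>; each
  complete period is a congruence class of \<open>\<int>\<^sub>r\<close>, and the incomplete rest is a progression
  of \<open>\<int>\<^sub>r\<close>. A progression of \<open>\<int>\<^sub>n\<close> has at most \<open>n / gcd n d\<close> terms, hence at most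
  \<open>n / r\<close> complete periods.
\<close>

lemma abs_sum_le_by_blocks:
  fixes h :: "nat \<Rightarrow> 'a::linordered_idom"
  assumes "0 < p"
    and partial: "\<And>j l. l \<le> p \<Longrightarrow> \<bar>\<Sum>k<l. h (j + k)\<bar> \<le> M"
    and complete: "\<And>j. \<bar>\<Sum>k<p. h (j + k)\<bar> \<le> M0"
  shows "\<bar>\<Sum>k<l. h (j + k)\<bar> \<le> M + of_nat (l div p) * M0"
proof (induction l arbitrary: j rule: less_induct)
  case (less l)
  show ?case
  proof (cases "l < p")
    case True
    then show ?thesis using partial by simp
  next
    case False
    have split: "(\<Sum>k<l. h (j + k)) = (\<Sum>k<p. h (j + k)) + (\<Sum>k<l - p. h (j + p + k))"
    proof -
      have "(\<Sum>k<l. h (j + k)) = (\<Sum>k<p. h (j + k)) + (\<Sum>k\<in>{p..<l}. h (j + k))"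
        using False by (simp add: lessThan_atLeast0 sum.atLeastLessThan_concat)
      also have "(\<Sum>k\<in>{p..<l}. h (j + k)) = (\<Sum>k<l - p. h (j + p + k))"
        unfolding sum.atLeastLessThan_shift_0[of _ p] lessThan_atLeast0 by (simp add: add.assoc)
      finally show ?thesis .
    qed
    have "\<bar>\<Sum>k<l - p. h (j + p + k)\<bar> \<le> M + of_nat ((l - p) div p) * M0"
      using less.IH[of "l - p" "j + p"] \<open>0 < p\<close> False by simp
    moreover have "l div p = Suc ((l - p) div p)"
      using False \<open>0 < p\<close> by (simp add: le_div_geq)
    ultimately show ?thesis
      using split complete[of j] by (simp add: algebra_simps)
  qed
qed

lemma inj_on_ap_mod:
  fixes N :: nat
  assumes "0 < N" and "l \<le> N div gcd N d"
  shows "inj_on (\<lambda>k. (a + k * d) mod N) {..<l}"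
proof -
  have eq_if_le: "k = k'" if "k \<le> k'" "k' < l" "(a + k * d) mod N = (a + k' * d) mod N" for k k'
  proof -
    obtain N' d' where N': "N = gcd N d * N'" and d': "d = gcd N d * d'" and "coprime N' d'"
      using gcd_coprime_exists[of N d] \<open>0 < N\<close> by (auto simp: ac_simps)
    have "N dvd (k' - k) * d"
      using that mod_eq_dvd_iff_nat[of "a + k * d" "a + k' * d" N]
      by (simp add: diff_mult_distrib)
    then have "N' dvd (k' - k) * d'"
      using \<open>0 < N\<close> by (subst (asm) N', subst (asm) d') (simp add: ac_simps)
    then have "N' dvd k' - k"
      using \<open>coprime N' d'\<close> by (simp add: coprime_dvd_mult_left_iff)
    moreover have "N div gcd N d = N'"
      using N' \<open>0 < N\<close> by (metis gcd_pos_nat nonzero_mult_div_cancel_left not_gr0)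
    then have "k' - k < N'"
      using that(2) assms(2) by linarith
    ultimately have "k' - k = 0"
      using nat_dvd_not_less by blast
    then show "k = k'"
      using that(1) by simp
  qed
  show ?thesis
  proof (rule inj_onI)
    fix k k' assume "k \<in> {..<l}" "k' \<in> {..<l}" "(a + k * d) mod N = (a + k' * d) mod N"
    then show "k = k'"
      using eq_if_le[of k k'] eq_if_le[of k' k] by (cases "k \<le> k'") auto
  qed
qed

lemma sum_ap_mod:
  fixes N :: nat
  assumes "0 < N" and "l \<le> N div gcd N d"
  shows "sum f ((\<lambda>k. (a + k * d) mod N) ` {..<l}) = (\<Sum>k<l. f ((a + k * d) mod N))"
  using sum.reindex[OF inj_on_ap_mod[OF assms]] by simp

lemma ap_mod_normalize:
  "(\<lambda>k. (a + k * d) mod N) ` L = (\<lambda>k. (a mod N + k * (d mod N)) mod N) ` (L :: nat set)"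
proof (rule image_cong)
  show "(a + k * d) mod N = (a mod N + k * (d mod N)) mod N" for k
    by (metis mod_add_cong mod_mod_trivial mod_mult_right_eq)
qed simp

lemma ap_mod_in_APs:
  fixes N :: nat
  assumes "0 < N" and "l \<le> N div gcd N d"
  shows "(\<lambda>k. (a + k * d) mod N) ` {..<l} \<in> APs N"
proof -
  have "gcd N (d mod N) = gcd N d"
    by (simp add: gcd_red_nat[symmetric] gcd.commute)
  with assms show ?thesis
    unfolding APs_def ap_mod_normalize[of a d N]
    by (intro CollectI exI[of _ "a mod N"] exI[of _ "d mod N"] exI[of _ l]) auto
qed

lemma ap_period_multiple: "N dvd (N div gcd N d) * (d :: nat)"
  by (metis div_mult_swap dvd_div_mult gcd_dvd1 gcd_dvd2 dvd_triv_left)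

lemma image_lessThan_periodic:
  fixes p m :: nat
  assumes "0 < p" and "p \<le> m" and "\<And>k. f (k mod p) = f k"
  shows "f ` {..<p} = f ` {..<m}"
proof (rule subset_antisym)
  show "f ` {..<p} \<subseteq> f ` {..<m}"
    using \<open>p \<le> m\<close> by (intro image_mono) simp
  show "f ` {..<m} \<subseteq> f ` {..<p}"
  proof
    fix y assume "y \<in> f ` {..<m}"
    then obtain k where "y = f (k mod p)"
      using assms(3) by auto
    then show "y \<in> f ` {..<p}"
      using \<open>0 < p\<close> by simp
  qed
qed

lemma ap_mod_in_APs0:
  fixes N :: nat
  assumes "0 < N"
  shows "(\<lambda>k. (a + k * d) mod N) ` {..<N div gcd N d} \<in> APs0 N"
proof -
  define p where "p = N div gcd N d"
  have "0 < p" "p \<le> N"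
    using assms by (simp_all add: p_def div_greater_zero_iff gcd_le1_nat)
  have "(k * d) mod N = (k mod p * d) mod N" for k
  proof -
    have "(k * d) mod N = (k * d) mod (p * d) mod N"
      unfolding p_def by (rule mod_mod_cancel[OF ap_period_multiple, symmetric])
    then show ?thesis
      by (simp only: mod_mult_mult2)
  qed
  then have "(a + k mod p * d) mod N = (a + k * d) mod N" for k
    by (metis mod_add_right_eq)
  then have "(\<lambda>k. (a + k * d) mod N) ` {..<p} = (\<lambda>k. (a + k * d) mod N) ` {..<N}"
    using \<open>0 < p\<close> \<open>p \<le> N\<close> by (intro image_lessThan_periodic)
  with assms show ?thesis
    unfolding APs0_def cclass_def p_def ap_mod_normalize[of a d N]
    by (intro CollectI exI[of _ "d mod N"] exI[of _ "a mod N"]) auto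
qed

lemma APs_subset_lessThan: "A \<in> APs N \<Longrightarrow> 0 < N \<Longrightarrow> A \<subseteq> {..<N}"
  unfolding APs_def by auto

lemma APs0_subset_lessThan: "A \<in> APs0 N \<Longrightarrow> 0 < N \<Longrightarrow> A \<subseteq> {..<N}"
  unfolding APs0_def cclass_def by auto

lemma finite_APs: "0 < N \<Longrightarrow> finite (APs N)"
  by (rule finite_subset[of _ "Pow {..<N}"]) (auto dest: APs_subset_lessThan)

lemma finite_APs0: "0 < N \<Longrightarrow> finite (APs0 N)"
  by (rule finite_subset[of _ "Pow {..<N}"]) (auto dest: APs0_subset_lessThan)

lemma empty_in_APs: "0 < N \<Longrightarrow> {} \<in> APs N"
  unfolding APs_def by (intro CollectI exI[of _ 0] exI[of _ 0] exI[of _ 0]) auto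

lemma abs_sum_le_maxdev: "finite F \<Longrightarrow> A \<in> F \<Longrightarrow> \<bar>sum \<chi> A\<bar> \<le> maxdev \<chi> F"
  unfolding maxdev_def by (rule Max_ge) auto

lemma maxdev_le:
  assumes "finite F" and "F \<noteq> {}" and "\<And>A. A \<in> F \<Longrightarrow> \<bar>sum \<chi> A\<bar> \<le> c"
  shows "maxdev \<chi> F \<le> c"
  unfolding maxdev_def using assms by (subst Max_le_iff) auto

lemma abs_sum_colouring_le_card:
  assumes "colouring N \<chi>" and "A \<subseteq> {..<N}"
  shows "\<bar>sum \<chi> A\<bar> \<le> int (card A)"
proof -
  have "\<bar>sum \<chi> A\<bar> \<le> (\<Sum>x\<in>A. \<bar>\<chi> x\<bar>)"
    by (rule sum_abs)
  also have "\<dots> = (\<Sum>x\<in>A. 1)"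
    using assms unfolding colouring_def by (intro sum.cong) auto
  finally show ?thesis
    by simp
qed

lemma maxdev_APs_range:
  assumes "0 < N" and "colouring N \<chi>"
  shows "maxdev \<chi> (APs N) \<in> {0..int N}"
proof -
  have lower: "0 \<le> maxdev \<chi> (APs N)"
    using abs_sum_le_maxdev[OF finite_APs[OF assms(1)] empty_in_APs[OF assms(1)], of \<chi>] by simp
  have "\<bar>sum \<chi> A\<bar> \<le> int N" if "A \<in> APs N" for A
  proof -
    have sub: "A \<subseteq> {..<N}"
      using that assms(1) by (rule APs_subset_lessThan)
    have "\<bar>sum \<chi> A\<bar> \<le> int (card A)"
      by (rule abs_sum_colouring_le_card[OF assms(2) sub])
    also have "\<dots> \<le> int N"
      using card_mono[OF finite_lessThan sub] by simp
    finally show ?thesis .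
  qed
  then have "maxdev \<chi> (APs N) \<le> int N"
    using empty_in_APs[OF assms(1)] by (intro maxdev_le finite_APs[OF assms(1)]) auto
  with lower show ?thesis
    by simp
qed

lemma disc_le_maxdev:
  assumes "0 < N" and "colouring N \<chi>"
  shows "disc N \<le> maxdev \<chi> (APs N)"
proof -
  have "{maxdev \<phi> (APs N) |\<phi>. colouring N \<phi>} \<subseteq> {0..int N}"
    using maxdev_APs_range[OF assms(1)] by blast
  then have "finite {maxdev \<phi> (APs N) |\<phi>. colouring N \<phi>}"
    by (rule finite_subset) simp
  then show ?thesis
    unfolding disc_def using assms(2) by (intro Min_le) auto
qed

lemma colouring_mod:
  "colouring r \<chi> \<Longrightarrow> 0 < r \<Longrightarrow> colouring n (\<lambda>x. \<chi> (x mod r))"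
  unfolding colouring_def by simp

lemma div_period_le:
  fixes n r :: nat
  assumes "0 < n" and "0 < r" and "r dvd n" and "l \<le> n div gcd n d"
  shows "l div (r div gcd r d) \<le> n div r"
proof -
  define p where "p = r div gcd r d"
  have "0 < p"
    using assms(2) by (simp add: p_def div_greater_zero_iff gcd_le1_nat)
  have "gcd r d dvd gcd n d"
    using assms(3) by (meson dvd_trans gcd_dvd1 gcd_dvd2 gcd_greatest)
  then have "gcd r d \<le> gcd n d"
    using assms by (intro dvd_imp_le) auto
  then have "n div gcd n d \<le> n div gcd r d"
    using assms(2) by (intro div_le_mono2) simp_all
  also obtain q where "n = r * q"
    using assms(3) by blast
  then have "n div gcd r d = n div r * p"
    using assms(2) by (simp add: p_def div_mult_swap mult.commute)
  finally have "l div p \<le> n div r * p div p"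
    using assms(4) by (intro div_le_mono) simp
  then show ?thesis
    using \<open>0 < p\<close> by (simp add: p_def)
qed

lemma maxdev_lift_le:
  fixes \<chi> :: "nat \<Rightarrow> int"
  assumes "0 < n" and "0 < r" and "r dvd n"
  shows "maxdev (\<lambda>x. \<chi> (x mod r)) (APs n)
           \<le> maxdev \<chi> (APs r) + int (n div r) * maxdev \<chi> (APs0 r)"
    (is "_ \<le> ?M + int (n div r) * ?K")
proof (rule maxdev_le[OF finite_APs[OF assms(1)]])
  show "APs n \<noteq> {}"
    using empty_in_APs[OF assms(1)] by blast
  have "0 \<le> ?K"
    using abs_sum_le_maxdev[OF finite_APs0 ap_mod_in_APs0, of r \<chi> 0 0] assms(2) by simp
  fix A assume "A \<in> APs n"
  then obtain a d l where A: "A = (\<lambda>k. (a + k * d) mod n) ` {..<l}" and "l \<le> n div gcd n d"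
    unfolding APs_def by blast
  define p where "p = r div gcd r d"
  have "0 < p"
    using assms(2) by (simp add: p_def div_greater_zero_iff gcd_le1_nat)
  have window: "(\<Sum>k<m. \<chi> ((a + (j + k) * d) mod r))
                  = sum \<chi> ((\<lambda>k. (a + j * d + k * d) mod r) ` {..<m})" if "m \<le> p" for j m
    using sum_ap_mod[OF assms(2), of m d \<chi> "a + j * d"] that
    by (simp add: p_def algebra_simps)
  have "sum (\<lambda>x. \<chi> (x mod r)) A = (\<Sum>k<l. \<chi> ((a + (0 + k) * d) mod r))"
    using sum_ap_mod[OF assms(1) \<open>l \<le> n div gcd n d\<close>, of "\<lambda>x. \<chi> (x mod r)" a]
    by (simp add: A mod_mod_cancel[OF assms(3)])
  also have "\<bar>\<dots>\<bar> \<le> ?M + int (l div p) * ?K"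
  proof (rule abs_sum_le_by_blocks[OF \<open>0 < p\<close>])
    show "\<bar>\<Sum>k<m. \<chi> ((a + (j + k) * d) mod r)\<bar> \<le> ?M" if "m \<le> p" for j m
      unfolding window[OF that] using that assms(2)
      by (intro abs_sum_le_maxdev finite_APs ap_mod_in_APs) (simp_all add: p_def)
    show "\<bar>\<Sum>k<p. \<chi> ((a + (j + k) * d) mod r)\<bar> \<le> ?K" for j
    proof -
      have "\<bar>\<Sum>k<p. \<chi> ((a + (j + k) * d) mod r)\<bar>
              = \<bar>sum \<chi> ((\<lambda>k. (a + j * d + k * d) mod r) ` {..<r div gcd r d})\<bar>"
        using window[of p j] by (simp add: p_def)
      also have "\<dots> \<le> ?K"
        using assms(2) by (intro abs_sum_le_maxdev finite_APs0 ap_mod_in_APs0)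
      finally show ?thesis .
    qed
  qed
  also have "int (l div p) * ?K \<le> int (n div r) * ?K"
    using div_period_le[OF assms \<open>l \<le> n div gcd n d\<close>] \<open>0 \<le> ?K\<close>
    by (intro mult_right_mono) (simp_all add: p_def)
  finally show "\<bar>sum (\<lambda>x. \<chi> (x mod r)) A\<bar> \<le> ?M + int (n div r) * ?K"
    by simp
qed

theorem lemma3p2:
  fixes n r :: nat and \<chi> :: "nat \<Rightarrow> int"
  assumes "0 < n" and "0 < r" and "r dvd n" and "colouring r \<chi>"
  shows "real_of_int (disc n) \<le>
           real_of_int (maxdev \<chi> (APs r)) + real n / real r * real_of_int (maxdev \<chi> (APs0 r))"
proof -
  have "disc n \<le> maxdev (\<lambda>x. \<chi> (x mod r)) (APs n)"
    using assms by (intro disc_le_maxdev colouring_mod)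
  also have "\<dots> \<le> maxdev \<chi> (APs r) + int (n div r) * maxdev \<chi> (APs0 r)"
    using assms(1-3) by (rule maxdev_lift_le)
  finally have "real_of_int (disc n)
                  \<le> real_of_int (maxdev \<chi> (APs r)) + real (n div r) * real_of_int (maxdev \<chi> (APs0 r))"
    by (metis of_int_add of_int_le_iff of_int_mult of_int_of_nat_eq)
  then show ?thesis
    using assms(3) by (simp add: real_of_nat_div)
qed

end
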